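(* Let PS1 and PS2 be pure strategies (as in the context) with $m_{PS1}$ finite, and suppose PS2 is complementary to PS1, i.e. $\Delta_{PS1}(X)<\Delta_{PS2}(X)$ for some $X\in\mathcal{S}_{\mathrm{non}}$. Then there exists a mixed strategy MS derived from PS1 and PS2 whose average expected hitting time satisfies $\bar m_{MS}<\bar m_{PS1}$, where $\bar m=\frac{1}{|\mathcal{S}|}\sum_{X\in\mathcal{S}}m(X)$.
   Context: A fitness function $f$ on a finite set is to be maximised. A metaheuristic generates populations $\Phi_0,\Phi_1,\dots$. Let $\mathcal{S}$ be the finite set of all populations, $\mathcal{S}_{\mathrm{opt}}$ those containing at least one optimal solution, $\mathcal{S}_{\mathrm{non}}=\mathcal{S}\setminus\mathcal{S}_{\mathrm{opt}}$. The sequence is a time-homogeneous Markov chain on $\mathcal{S}$ with transition probabilities $P(X,Y)=\Pr(\Phi_{t+1}=Y\mid\Phi_t=X)$, every state of $\mathcal{S}_{\mathrm{opt}}$ absorbing. The expected hitting time $m(X)\in[0,\infty]$ is the expected number of generations until first entering $\mathcal{S}_{\mathrm{opt}}$ from $\Phi_0=X$ ($m(X)=0$ on $\mathcal{S}_{\mathrm{opt}}$). A pure strategy is such a time-independent transition matrix. PS1, PS2 are pure strategies with transition matrices $P_1,P_2$ on the same $\mathcal{S}$ (with $\mathcal{S}_{\mathrm{opt}}$ absorbing), expected hitting times $m_{PS1},m_{PS2}$. A mixed strategy MS derived from PS1 and PS2 assigns to each $X\in\mathcal{S}$ probabilities $P_X(PS1)\in[0,1]$, $P_X(PS2)=1-P_X(PS1)$,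 and has transition matrix $P_{MS}(X,Y)=P_X(PS1)P_1(X,Y)+P_X(PS2)P_2(X,Y)$, with expected hitting time $m_{MS}$. With $d(X)=m_{PS1}(X)$, for $X\in\mathcal{S}_{\mathrm{non}}$: $\Delta_{PS1}(X)=d(X)-\sum_{Y\in\mathcal{S}_{\mathrm{non}}}P_1(X,Y)d(Y)$, $\Delta_{PS2}(X)=d(X)-\sum_{Y\in\mathcal{S}_{\mathrm{non}}}P_2(X,Y)d(Y)$. *)

theory Defs
  imports "HOL-Analysis.Analysis"
begin

text \<open>A population space: a finite set S of populations, with the subset Sopt of
populations containing an optimal solution. A pure strategy is a time-homogeneous
transition matrix P on S (stochastic rows, every state of Sopt absorbing).\<close>

definition transition_matrix :: "'a set \<Rightarrow> 'a set \<Rightarrow> ('a \<Rightarrow> 'a \<Rightarrow> real) \<Rightarrow> bool" where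
  "transition_matrix S Sopt P \<longleftrightarrow>
     (\<forall>X\<in>S. \<forall>Y\<in>S. 0 \<le> P X Y) \<and>
     (\<forall>X\<in>S. (\<Sum>Y\<in>S. P X Y) = 1) \<and>
     (\<forall>X\<in>Sopt. P X X = 1)"

text \<open>survival S Sopt P t X = Pr(Phi_0, ..., Phi_t all lie in S - Sopt | Phi_0 = X),
i.e. the probability that the hitting time of Sopt exceeds t.\<close>

fun survival :: "'a set \<Rightarrow> 'a set \<Rightarrow> ('a \<Rightarrow> 'a \<Rightarrow> real) \<Rightarrow> nat \<Rightarrow> 'a \<Rightarrow> real" where
  "survival S Sopt P 0 X = (if X \<in> S - Sopt then 1 else 0)"
| "survival S Sopt P (Suc t) X =
     (if X \<in> S - Sopt then (\<Sum>Y\<in>S - Sopt. P X Y * survival S Sopt P t Y) else 0)"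

text \<open>Expected hitting time of Sopt, in [0, \<infinity>], via E[T] = sum over t of Pr(T > t).\<close>

definition hitting_time :: "'a set \<Rightarrow> 'a set \<Rightarrow> ('a \<Rightarrow> 'a \<Rightarrow> real) \<Rightarrow> 'a \<Rightarrow> ennreal" where
  "hitting_time S Sopt P X = (\<Sum>t. ennreal (survival S Sopt P t X))"

definition avg_hitting_time :: "'a set \<Rightarrow> 'a set \<Rightarrow> ('a \<Rightarrow> 'a \<Rightarrow> real) \<Rightarrow> ennreal" where
  "avg_hitting_time S Sopt P = (\<Sum>X\<in>S. hitting_time S Sopt P X) / of_nat (card S)"

definition Delta :: "'a set \<Rightarrow> 'a set \<Rightarrow> ('a \<Rightarrow> 'a \<Rightarrow> real) \<Rightarrow> ('a \<Rightarrow> 'a \<Rightarrow> real) \<Rightarrow> 'a \<Rightarrow> real" where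
  "Delta S Sopt P1 Q X =
     enn2real (hitting_time S Sopt P1 X)
     - (\<Sum>Y\<in>S - Sopt. Q X Y * enn2real (hitting_time S Sopt P1 Y))"

end

theory Submission
  imports Defs
begin

text \<open>The expected hitting time d of PS1 solves the first-step equation
d X = 1 + \<Sum>Y\<in>S - Sopt. P1 X Y * d Y on the non-optimal populations. If PS2 does strictly
better than PS1 on d at one state X0, the mixed strategy that uses PS2 at X0 and PS1
elsewhere has d as a supersolution of its own first-step equation, strictly at X0. A
nonnegative supersolution dominates the expected hitting time, since it dominates every
partial sum of the survival probabilities; hence the new hitting times are bounded by d
everywhere and strictly below it at X0, and so is their average.\<close>

lemma survival_nonneg:
  assumes "\<forall>X\<in>S. \<forall>Y\<in>S. 0 \<le> P X Y" "Sopt \<subseteq> S"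
  shows "0 \<le> survival S Sopt P t X"
  using assms by (induction t arbitrary: X) (auto intro!: sum_nonneg mult_nonneg_nonneg)

lemma survival_eq_0: "X \<notin> S - Sopt \<Longrightarrow> survival S Sopt P t X = 0"
  by (cases t) auto

lemma hitting_time_eq_0: "X \<notin> S - Sopt \<Longrightarrow> hitting_time S Sopt P X = 0"
  unfolding hitting_time_def by (simp add: survival_eq_0)

lemma hitting_time_first_step:
  assumes "finite S" "Sopt \<subseteq> S" "\<forall>X\<in>S. \<forall>Y\<in>S. 0 \<le> P X Y" "X \<in> S - Sopt"
  shows "hitting_time S Sopt P X
       = 1 + (\<Sum>Y\<in>S - Sopt. ennreal (P X Y) * hitting_time S Sopt P Y)"
proof -
  have nonneg: "0 \<le> survival S Sopt P t Y" for t Y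
    by (rule survival_nonneg[OF assms(3,2)])
  have shift: "hitting_time S Sopt P X
      = (\<Sum>t. ennreal (survival S Sopt P (t + 1) X)) + (\<Sum>j<1. ennreal (survival S Sopt P j X))"
    unfolding hitting_time_def by (rule suminf_offset) (rule summableI)
  have head: "(\<Sum>j<1. ennreal (survival S Sopt P j X)) = 1"
    using assms(4) by simp
  have step: "ennreal (survival S Sopt P (t + 1) X)
      = (\<Sum>Y\<in>S - Sopt. ennreal (P X Y) * ennreal (survival S Sopt P t Y))" for t
  proof -
    have "ennreal (survival S Sopt P (t + 1) X)
        = ennreal (\<Sum>Y\<in>S - Sopt. P X Y * survival S Sopt P t Y)"
      using assms(4) by simp
    also have "\<dots> = (\<Sum>Y\<in>S - Sopt. ennreal (P X Y * survival S Sopt P t Y))"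
      using assms nonneg by (intro sum_ennreal[symmetric] mult_nonneg_nonneg) auto
    also have "\<dots> = (\<Sum>Y\<in>S - Sopt. ennreal (P X Y) * ennreal (survival S Sopt P t Y))"
      using assms nonneg by (intro sum.cong refl ennreal_mult) auto
    finally show ?thesis .
  qed
  have swap: "(\<Sum>t. \<Sum>Y\<in>S - Sopt. ennreal (P X Y) * ennreal (survival S Sopt P t Y))
      = (\<Sum>Y\<in>S - Sopt. \<Sum>t. ennreal (P X Y) * ennreal (survival S Sopt P t Y))"
    by (rule suminf_sum) (rule summableI)
  have cmult: "(\<Sum>t. ennreal (P X Y) * ennreal (survival S Sopt P t Y))
      = ennreal (P X Y) * hitting_time S Sopt P Y" for Y
    unfolding hitting_time_def by (rule ennreal_suminf_cmult)
  show ?thesis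
    unfolding shift head step swap cmult by (rule add.commute)
qed

lemma hitting_time_first_step_real:
  assumes "finite S" "Sopt \<subseteq> S" "\<forall>X\<in>S. \<forall>Y\<in>S. 0 \<le> P X Y" "X \<in> S - Sopt"
    and "\<forall>Y\<in>S. hitting_time S Sopt P Y < \<infinity>"
  defines "d \<equiv> \<lambda>Y. enn2real (hitting_time S Sopt P Y)"
  shows "d X = 1 + (\<Sum>Y\<in>S - Sopt. P X Y * d Y)"
proof -
  have d_nonneg: "0 \<le> d Y" for Y
    unfolding d_def by simp
  have hitting_d: "hitting_time S Sopt P Y = ennreal (d Y)" if "Y \<in> S" for Y
    using assms(5) that unfolding d_def by (simp add: less_top)
  have rhs_nonneg: "0 \<le> (\<Sum>Y\<in>S - Sopt. P X Y * d Y)"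
    using assms(3,4) d_nonneg by (intro sum_nonneg mult_nonneg_nonneg) auto
  have "ennreal (d X) = 1 + (\<Sum>Y\<in>S - Sopt. ennreal (P X Y) * ennreal (d Y))"
    using hitting_time_first_step[OF assms(1-4)] assms(4) by (simp add: hitting_d)
  also have "\<dots> = 1 + (\<Sum>Y\<in>S - Sopt. ennreal (P X Y * d Y))"
    using assms(3,4) d_nonneg by (auto intro!: sum.cong simp: ennreal_mult)
  also have "\<dots> = 1 + ennreal (\<Sum>Y\<in>S - Sopt. P X Y * d Y)"
    using assms(3,4) d_nonneg by (subst sum_ennreal) (auto intro!: mult_nonneg_nonneg)
  also have "\<dots> = ennreal (1 + (\<Sum>Y\<in>S - Sopt. P X Y * d Y))"
    using rhs_nonneg by (simp add: ennreal_plus)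
  finally show ?thesis
    using d_nonneg rhs_nonneg by (subst (asm) ennreal_inj) auto
qed

lemma survival_partial_sum_le_supersolution:
  assumes "\<forall>X\<in>S. \<forall>Y\<in>S. 0 \<le> Q X Y"
    and "\<forall>X\<in>S - Sopt. 0 \<le> d X"
    and "\<forall>X\<in>S - Sopt. 1 + (\<Sum>Y\<in>S - Sopt. Q X Y * d Y) \<le> d X"
    and "X \<in> S - Sopt"
  shows "(\<Sum>t<n. survival S Sopt Q t X) \<le> 1 + (\<Sum>Y\<in>S - Sopt. Q X Y * d Y)"
  using assms(4)
proof (induction n arbitrary: X)
  case 0
  then have "0 \<le> (\<Sum>Y\<in>S - Sopt. Q X Y * d Y)"
    using assms(1,2) by (intro sum_nonneg mult_nonneg_nonneg) auto
  then show ?case by simp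
next
  case (Suc n)
  have "(\<Sum>t<Suc n. survival S Sopt Q t X)
      = survival S Sopt Q 0 X + (\<Sum>t<n. survival S Sopt Q (Suc t) X)"
    by (rule sum.lessThan_Suc_shift)
  also have "\<dots> = 1 + (\<Sum>t<n. \<Sum>Y\<in>S - Sopt. Q X Y * survival S Sopt Q t Y)"
    using Suc.prems by (simp del: sum.lessThan_Suc)
  also have "\<dots> = 1 + (\<Sum>Y\<in>S - Sopt. Q X Y * (\<Sum>t<n. survival S Sopt Q t Y))"
    by (simp only: sum.swap[of _ "{..<n}"] sum_distrib_left)
  also have "\<dots> \<le> 1 + (\<Sum>Y\<in>S - Sopt. Q X Y * d Y)"
  proof -
    have "Q X Y * (\<Sum>t<n. survival S Sopt Q t Y) \<le> Q X Y * d Y" if "Y \<in> S - Sopt" for Y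
      using Suc.IH[OF that] assms(3) that Suc.prems assms(1)
      by (intro mult_left_mono) (auto intro: order_trans)
    then show ?thesis
      by (intro add_left_mono sum_mono) blast
  qed
  finally show ?case .
qed

lemma hitting_time_le_supersolution:
  assumes "\<forall>X\<in>S. \<forall>Y\<in>S. 0 \<le> Q X Y" "Sopt \<subseteq> S"
    and "\<forall>X\<in>S - Sopt. 0 \<le> d X"
    and "\<forall>X\<in>S - Sopt. 1 + (\<Sum>Y\<in>S - Sopt. Q X Y * d Y) \<le> d X"
    and "X \<in> S - Sopt"
  shows "hitting_time S Sopt Q X \<le> ennreal (1 + (\<Sum>Y\<in>S - Sopt. Q X Y * d Y))"
  unfolding hitting_time_def
proof (rule suminf_le_const[OF summableI])
  fix n
  have "(\<Sum>t<n. ennreal (survival S Sopt Q t X)) = ennreal (\<Sum>t<n. survival S Sopt Q t X)"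
    using survival_nonneg[OF assms(1,2)] by simp
  also have "\<dots> \<le> ennreal (1 + (\<Sum>Y\<in>S - Sopt. Q X Y * d Y))"
    using survival_partial_sum_le_supersolution[OF assms(1,3-5)] by (rule ennreal_leI)
  finally show "(\<Sum>t<n. ennreal (survival S Sopt Q t X))
      \<le> ennreal (1 + (\<Sum>Y\<in>S - Sopt. Q X Y * d Y))" .
qed

lemma hitting_time_le_of_first_step_le:
  fixes S Sopt :: "'a set" and P Q :: "'a \<Rightarrow> 'a \<Rightarrow> real"
  defines "d \<equiv> \<lambda>Y. enn2real (hitting_time S Sopt P Y)"
  assumes "finite S" "Sopt \<subseteq> S"
    and "\<forall>X\<in>S. \<forall>Y\<in>S. 0 \<le> P X Y" "\<forall>X\<in>S. \<forall>Y\<in>S. 0 \<le> Q X Y"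
    and "\<forall>X\<in>S. hitting_time S Sopt P X < \<infinity>"
    and "\<forall>X\<in>S - Sopt. (\<Sum>Y\<in>S - Sopt. Q X Y * d Y) \<le> (\<Sum>Y\<in>S - Sopt. P X Y * d Y)"
  shows "X \<in> S \<Longrightarrow> hitting_time S Sopt Q X \<le> hitting_time S Sopt P X"
    and "X \<in> S - Sopt \<Longrightarrow> (\<Sum>Y\<in>S - Sopt. Q X Y * d Y) < (\<Sum>Y\<in>S - Sopt. P X Y * d Y)
         \<Longrightarrow> hitting_time S Sopt Q X < hitting_time S Sopt P X"
proof -
  have d_nonneg: "0 \<le> d X" for X
    unfolding d_def by simp
  have d_first_step: "d X = 1 + (\<Sum>Y\<in>S - Sopt. P X Y * d Y)" if "X \<in> S - Sopt" for X
    using hitting_time_first_step_real[OF assms(2-4) that assms(6)] unfolding d_def .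
  have hitting_P: "hitting_time S Sopt P X = ennreal (d X)" if "X \<in> S" for X
    using assms(6) that unfolding d_def by (simp add: less_top)
  have supersolution: "\<forall>X\<in>S - Sopt. 1 + (\<Sum>Y\<in>S - Sopt. Q X Y * d Y) \<le> d X"
    using assms(7) d_first_step by fastforce
  then have hitting_Q: "hitting_time S Sopt Q X \<le> ennreal (1 + (\<Sum>Y\<in>S - Sopt. Q X Y * d Y))"
    if "X \<in> S - Sopt" for X
    using hitting_time_le_supersolution[OF assms(5,3)] d_nonneg that by blast
  show "hitting_time S Sopt Q X \<le> hitting_time S Sopt P X" if "X \<in> S"
  proof (cases "X \<in> S - Sopt")
    case True
    then show ?thesis
      using order_trans[OF hitting_Q[OF True] ennreal_leI] supersolution that
      by (simp add: hitting_P)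
  qed (simp add: hitting_time_eq_0)
  show "hitting_time S Sopt Q X < hitting_time S Sopt P X"
    if X: "X \<in> S - Sopt" and less: "(\<Sum>Y\<in>S - Sopt. Q X Y * d Y) < (\<Sum>Y\<in>S - Sopt. P X Y * d Y)"
  proof -
    have "0 \<le> (\<Sum>Y\<in>S - Sopt. Q X Y * d Y)"
      using assms(5) X d_nonneg by (intro sum_nonneg mult_nonneg_nonneg) auto
    then have "ennreal (1 + (\<Sum>Y\<in>S - Sopt. Q X Y * d Y)) < ennreal (d X)"
      using less d_first_step[OF X] by (intro ennreal_lessI) auto
    then show ?thesis
      using hitting_Q[OF X] X by (simp add: hitting_P)
  qed
qed

lemma sum_div_card_strict_mono_ennreal:
  fixes a b :: "'a \<Rightarrow> ennreal"
  assumes "finite S" "X0 \<in> S"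
    and "\<forall>X\<in>S. a X \<le> b X \<and> b X < \<infinity>"
    and "a X0 < b X0"
  shows "(\<Sum>X\<in>S. a X) / of_nat (card S) < (\<Sum>X\<in>S. b X) / of_nat (card S)"
proof -
  define f where "f X = enn2real (a X)" for X
  define g where "g X = enn2real (b X)" for X
  have a_eq: "a X = ennreal (f X)" and b_eq: "b X = ennreal (g X)" if "X \<in> S" for X
    using assms(3) that unfolding f_def g_def by (auto simp: less_top intro: le_less_trans)
  have card_pos: "0 < real (card S)"
    using assms(1,2) card_gt_0_iff by auto
  have f_nonneg: "0 \<le> f X" and g_nonneg: "0 \<le> g X" for X
    unfolding f_def g_def by simp_all
  have "f X \<le> g X" if "X \<in> S" for X
  proof -
    have "a X \<le> b X"
      using assms(3) that by blast
    then show ?thesis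
      by (simp add: a_eq[OF that] b_eq[OF that] g_nonneg)
  qed
  moreover have "f X0 < g X0"
    using assms(2,4) by (simp add: a_eq b_eq ennreal_less_iff f_nonneg)
  ultimately have sum_less: "(\<Sum>X\<in>S. f X) < (\<Sum>X\<in>S. g X)"
    using assms(1,2) by (intro sum_strict_mono_ex1) auto
  have "(\<Sum>X\<in>S. a X) / of_nat (card S) = ennreal ((\<Sum>X\<in>S. f X) / real (card S))"
    using f_nonneg card_pos
    by (simp add: a_eq sum_ennreal sum_nonneg ennreal_of_nat_eq_real_of_nat divide_ennreal)
  also have "\<dots> < ennreal ((\<Sum>X\<in>S. g X) / real (card S))"
    using sum_less f_nonneg card_pos
    by (simp add: ennreal_less_iff sum_nonneg divide_strict_right_mono)
  also have "\<dots> = (\<Sum>X\<in>S. b X) / of_nat (card S)"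
    using g_nonneg card_pos
    by (simp add: b_eq sum_ennreal sum_nonneg ennreal_of_nat_eq_real_of_nat divide_ennreal)
  finally show ?thesis .
qed

theorem corollary4:
  fixes S Sopt :: "'a set" and P1 P2 :: "'a \<Rightarrow> 'a \<Rightarrow> real"
  assumes "finite S" and "Sopt \<subseteq> S"
    and "transition_matrix S Sopt P1" and "transition_matrix S Sopt P2"
    and "\<forall>X\<in>S. hitting_time S Sopt P1 X < \<infinity>"
    and "\<exists>X\<in>S - Sopt. Delta S Sopt P1 P1 X < Delta S Sopt P1 P2 X"
  shows "\<exists>p :: 'a \<Rightarrow> real. (\<forall>X\<in>S. 0 \<le> p X \<and> p X \<le> 1) \<and>
           avg_hitting_time S Sopt (\<lambda>X Y. p X * P1 X Y + (1 - p X) * P2 X Y)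
             < avg_hitting_time S Sopt P1"
proof -
  define d where "d X = enn2real (hitting_time S Sopt P1 X)" for X
  obtain X0 where X0: "X0 \<in> S - Sopt"
    and P2_better: "(\<Sum>Y\<in>S - Sopt. P2 X0 Y * d Y) < (\<Sum>Y\<in>S - Sopt. P1 X0 Y * d Y)"
    using assms(6) unfolding Delta_def d_def by auto
  define p where "p X = (if X = X0 then 0 else 1 :: real)" for X
  define Q where "Q X Y = p X * P1 X Y + (1 - p X) * P2 X Y" for X Y
  have P1_nonneg: "\<forall>X\<in>S. \<forall>Y\<in>S. 0 \<le> P1 X Y" and P2_nonneg: "\<forall>X\<in>S. \<forall>Y\<in>S. 0 \<le> P2 X Y"
    using assms(3,4) unfolding transition_matrix_def by auto
  then have Q_nonneg: "\<forall>X\<in>S. \<forall>Y\<in>S. 0 \<le> Q X Y"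
    by (auto simp: Q_def p_def)
  have Q_step_sum: "(\<Sum>Y\<in>S - Sopt. Q X Y * d Y)
      = (if X = X0 then (\<Sum>Y\<in>S - Sopt. P2 X0 Y * d Y) else (\<Sum>Y\<in>S - Sopt. P1 X Y * d Y))" for X
    by (simp add: Q_def p_def)
  note comparison = hitting_time_le_of_first_step_le[OF assms(1,2) P1_nonneg Q_nonneg assms(5),
      folded d_def, unfolded Q_step_sum]
  have "avg_hitting_time S Sopt Q < avg_hitting_time S Sopt P1"
    unfolding avg_hitting_time_def
    using X0 P2_better assms(5) comparison
    by (intro sum_div_card_strict_mono_ennreal[OF assms(1), of X0]) auto
  then show ?thesis
    by (intro exI[of _ p]) (auto simp: p_def Q_def[abs_def])
qed

end
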